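(* For every $\delta>0$ there exists an instance of weighted correlation clustering on a complete graph with weights satisfying the triangle inequality for which the ratio between the minimum cost of a clustering and the optimal value of the LP relaxation is at least $6/5-\delta$.
   Context: Weighted correlation clustering on a complete graph: finite vertex set $V$; each pair $u\ne v$ has weights $\lambda^+_{uv},\lambda^-_{uv}\ge 0$ with $\lambda^+_{uv}+\lambda^-_{uv}=1$. The cost of a clustering (partition of $V$) is $\sum_{u\ne v}\big(\lambda^+_{uv}\mathbb{1}[u,v\text{ in different clusters}]+\lambda^-_{uv}\mathbb{1}[u,v\text{ in the same cluster}]\big)$ (each unordered pair once). The weights satisfy the triangle inequality if $\lambda^-_{uw}\le\lambda^-_{uv}+\lambda^-_{vw}$ for all distinct $u,v,w$. LP relaxation: variables $x_{uv}=x_{vu}\in[0,1]$, $x_{uu}=0$, $x_{uv}+x_{vw}\ge x_{uw}$ for all $u,v,w$; minimize $\sum_{u\ne v}\big(\lambda^+_{uv}x_{uv}+\lambda^-_{uv}(1-x_{uv})\big)$. *)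

theory Defs
  imports "HOL-Analysis.Analysis" "HOL-Library.Disjoint_Sets"
begin

text \<open>An instance: a finite vertex set V of naturals with weights lp u v = lambda^+_{uv};
  lambda^-_{uv} = 1 - lambda^+_{uv}. Unordered pairs are enumerated as (u,v) with u < v.\<close>

definition pairs :: "nat set \<Rightarrow> (nat \<times> nat) set" where
  "pairs V = {(u, v). u \<in> V \<and> v \<in> V \<and> u < v}"

definition valid_weights :: "nat set \<Rightarrow> (nat \<Rightarrow> nat \<Rightarrow> real) \<Rightarrow> bool" where
  "valid_weights V lp \<longleftrightarrow>
     (\<forall>u\<in>V. \<forall>v\<in>V. u \<noteq> v \<longrightarrow> 0 \<le> lp u v \<and> lp u v \<le> 1 \<and> lp u v = lp v u)"

definition triangle_ineq :: "nat set \<Rightarrow> (nat \<Rightarrow> nat \<Rightarrow> real) \<Rightarrow> bool" where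
  "triangle_ineq V lp \<longleftrightarrow>
     (\<forall>u\<in>V. \<forall>v\<in>V. \<forall>w\<in>V. u \<noteq> v \<and> v \<noteq> w \<and> u \<noteq> w \<longrightarrow>
        1 - lp u w \<le> (1 - lp u v) + (1 - lp v w))"

definition same_cluster :: "nat set set \<Rightarrow> nat \<Rightarrow> nat \<Rightarrow> bool" where
  "same_cluster P u v \<longleftrightarrow> (\<exists>C\<in>P. u \<in> C \<and> v \<in> C)"

definition cc_cost :: "nat set \<Rightarrow> (nat \<Rightarrow> nat \<Rightarrow> real) \<Rightarrow> nat set set \<Rightarrow> real" where
  "cc_cost V lp P = (\<Sum>(u, v)\<in>pairs V.
      (if same_cluster P u v then 1 - lp u v else lp u v))"

definition cc_opt :: "nat set \<Rightarrow> (nat \<Rightarrow> nat \<Rightarrow> real) \<Rightarrow> real" where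
  "cc_opt V lp = Inf (cc_cost V lp ` {P. partition_on V P})"

definition lp_feasible :: "nat set \<Rightarrow> (nat \<Rightarrow> nat \<Rightarrow> real) \<Rightarrow> bool" where
  "lp_feasible V x \<longleftrightarrow>
     (\<forall>u\<in>V. \<forall>v\<in>V. x u v = x v u \<and> 0 \<le> x u v \<and> x u v \<le> 1) \<and>
     (\<forall>u\<in>V. x u u = 0) \<and>
     (\<forall>u\<in>V. \<forall>v\<in>V. \<forall>w\<in>V. x u w \<le> x u v + x v w)"

definition lp_obj :: "nat set \<Rightarrow> (nat \<Rightarrow> nat \<Rightarrow> real) \<Rightarrow> (nat \<Rightarrow> nat \<Rightarrow> real) \<Rightarrow> real" where
  "lp_obj V lp x = (\<Sum>(u, v)\<in>pairs V. lp u v * x u v + (1 - lp u v) * (1 - x u v))"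

definition lp_opt :: "nat set \<Rightarrow> (nat \<Rightarrow> nat \<Rightarrow> real) \<Rightarrow> real" where
  "lp_opt V lp = Inf (lp_obj V lp ` {x. lp_feasible V x})"

end

theory Submission
  imports Defs
begin

text \<open>Split 2k vertices into two halves of size k, with \<open>\<lambda>\<^sup>+ = 1/3\<close> inside each half and
  \<open>\<lambda>\<^sup>+ = 2/3\<close> across; since \<open>\<lambda>\<^sup>- \<in> {1/3, 2/3}\<close>, the triangle inequality holds.
  With \<open>s u = \<plusminus>1\<close> marking the half of u, a clustering costs \<open>\<Sum> (1/2 - s u s v / 6)\<close> over all
  pairs plus \<open>s u s v / 3\<close> over the pairs inside clusters. The second sum equals
  \<open>(\<Sum>\<^sub>C (\<Sum>u\<in>C. s u)\<^sup>2 - 2k) / 6 \<ge> -k/3\<close>, so every clustering costs at least \<open>k\<^sup>2 - 2k/3\<close>.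
  The fractional point cutting pairs inside a half completely and pairs across by 1/2 costs
  only \<open>(5k\<^sup>2 - 2k) / 6\<close>, so the ratio tends to 6/5.\<close>

lemma finite_pairs: "finite V \<Longrightarrow> finite (pairs V)"
  by (rule finite_subset[of _ "V \<times> V"]) (auto simp: pairs_def)

lemma sum_Times_self_eq_diagonal_plus_pairs:
  fixes g :: "nat \<Rightarrow> nat \<Rightarrow> 'a::comm_monoid_add"
  assumes fin: "finite V" and sym: "\<And>u v. g u v = g v u"
  shows "(\<Sum>(u,v)\<in>V\<times>V. g u v) = (\<Sum>u\<in>V. g u u) + ((\<Sum>(u,v)\<in>pairs V. g u v) + (\<Sum>(u,v)\<in>pairs V. g u v))"
proof -
  define D where "D = (\<lambda>u. (u,u)) ` V"
  define Q where "Q = prod.swap ` pairs V"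
  have split: "V \<times> V = D \<union> (pairs V \<union> Q)"
    by (auto simp: D_def Q_def pairs_def image_iff)
  have "(\<Sum>(u,v)\<in>D \<union> (pairs V \<union> Q). g u v)
      = (\<Sum>(u,v)\<in>D. g u v) + ((\<Sum>(u,v)\<in>pairs V. g u v) + (\<Sum>(u,v)\<in>Q. g u v))"
  proof -
    have "D \<inter> (pairs V \<union> Q) = {}" "pairs V \<inter> Q = {}"
      by (auto simp: D_def Q_def pairs_def)
    then show ?thesis
      using fin finite_pairs[OF fin] by (simp add: D_def Q_def sum.union_disjoint)
  qed
  also have "(\<Sum>(u,v)\<in>D. g u v) = (\<Sum>u\<in>V. g u u)"
    unfolding D_def by (subst sum.reindex) (auto simp: inj_on_def)
  also have "(\<Sum>(u,v)\<in>Q. g u v) = (\<Sum>(u,v)\<in>pairs V. g u v)"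
    unfolding Q_def by (subst sum.reindex) (auto simp: inj_on_def sym intro!: sum.cong)
  finally show ?thesis by (simp only: split)
qed

lemma sum_pairs_product:
  fixes f :: "nat \<Rightarrow> real"
  assumes "finite V"
  shows "2 * (\<Sum>(u,v)\<in>pairs V. f u * f v) = (\<Sum>u\<in>V. f u)\<^sup>2 - (\<Sum>u\<in>V. (f u)\<^sup>2)"
proof -
  have "(\<Sum>u\<in>V. f u)\<^sup>2 = (\<Sum>(u,v)\<in>V\<times>V. f u * f v)"
    by (simp add: power2_eq_square sum_product sum.cartesian_product)
  also have "\<dots> = (\<Sum>u\<in>V. (f u)\<^sup>2) + 2 * (\<Sum>(u,v)\<in>pairs V. f u * f v)"
    using sum_Times_self_eq_diagonal_plus_pairs[OF assms, of "\<lambda>u v. f u * f v"]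
    by (simp add: power2_eq_square mult.commute)
  finally show ?thesis by simp
qed

lemma card_pairs:
  assumes "finite V"
  shows "2 * real (card (pairs V)) = (real (card V))\<^sup>2 - real (card V)"
  using sum_pairs_product[OF assms, of "\<lambda>_. 1"] by simp

lemma sum_same_cluster_product:
  fixes f :: "nat \<Rightarrow> real"
  assumes fin: "finite V" and P: "partition_on V P"
  shows "(\<Sum>(u,v)\<in>V\<times>V. if same_cluster P u v then f u * f v else 0) = (\<Sum>C\<in>P. (\<Sum>u\<in>C. f u)\<^sup>2)"
proof -
  have U: "\<Union>P = V" and disj: "disjoint P" using P by (simp_all add: partition_on_def)
  have fin_P: "finite P" by (rule finite_UnionD) (simp add: U fin)
  have fin_C: "finite C" if "C \<in> P" for C
  proof (rule finite_subset[OF _ fin])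
    show "C \<subseteq> V" using that U by blast
  qed
  have same_cluster_pairs: "{p \<in> V\<times>V. same_cluster P (fst p) (snd p)} = (\<Union>C\<in>P. C \<times> C)"
  proof (rule set_eqI)
    fix p :: "nat \<times> nat"
    obtain a b where p: "p = (a,b)" by (cases p)
    show "p \<in> {p \<in> V\<times>V. same_cluster P (fst p) (snd p)} \<longleftrightarrow> p \<in> (\<Union>C\<in>P. C \<times> C)"
      unfolding p same_cluster_def using U by auto
  qed
  have "(\<Sum>(u,v)\<in>V\<times>V. if same_cluster P u v then f u * f v else 0)
        = (\<Sum>p\<in>V\<times>V. if same_cluster P (fst p) (snd p) then f (fst p) * f (snd p) else 0)"
    by (intro sum.cong refl) (simp add: split_def)
  also have "\<dots> = (\<Sum>p\<in>{p \<in> V\<times>V. same_cluster P (fst p) (snd p)}. f (fst p) * f (snd p))"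
    using fin by (intro sum.inter_filter[symmetric]) simp
  also have "\<dots> = (\<Sum>C\<in>P. \<Sum>p\<in>C\<times>C. f (fst p) * f (snd p))"
    unfolding same_cluster_pairs
  proof (rule sum.UNION_disjoint)
    show "\<forall>C\<in>P. \<forall>D\<in>P. C \<noteq> D \<longrightarrow> C \<times> C \<inter> D \<times> D = {}"
    proof (intro ballI impI)
      fix C D assume "C \<in> P" "D \<in> P" "C \<noteq> D"
      then have "C \<inter> D = {}" by (rule disjointD[OF disj])
      then show "C \<times> C \<inter> D \<times> D = {}" by blast
    qed
  qed (use fin_P fin_C in auto)
  also have "\<dots> = (\<Sum>C\<in>P. (\<Sum>u\<in>C. f u) * (\<Sum>u\<in>C. f u))"
    by (intro sum.cong refl) (simp only: sum_product sum.cartesian_product, simp add: case_prod_unfold)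
  also have "\<dots> = (\<Sum>C\<in>P. (\<Sum>u\<in>C. f u)\<^sup>2)"
    by (simp add: power2_eq_square)
  finally show ?thesis .
qed

lemma same_cluster_commute: "same_cluster P u v = same_cluster P v u"
  by (auto simp: same_cluster_def)

lemma sum_pairs_same_cluster_product_ge:
  fixes f :: "nat \<Rightarrow> real"
  assumes fin: "finite V" and P: "partition_on V P"
  shows "2 * (\<Sum>(u,v)\<in>pairs V. if same_cluster P u v then f u * f v else 0) \<ge> - (\<Sum>u\<in>V. (f u)\<^sup>2)"
proof -
  have refl: "same_cluster P u u" if "u \<in> V" for u
    using P that by (auto simp: partition_on_def same_cluster_def)
  have "0 \<le> (\<Sum>C\<in>P. (\<Sum>u\<in>C. f u)\<^sup>2)" by (simp add: sum_nonneg)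
  also have "\<dots> = (\<Sum>(u,v)\<in>V\<times>V. if same_cluster P u v then f u * f v else 0)"
    by (rule sum_same_cluster_product[OF fin P, symmetric])
  also have "\<dots> = (\<Sum>u\<in>V. (f u)\<^sup>2) + 2 * (\<Sum>(u,v)\<in>pairs V. if same_cluster P u v then f u * f v else 0)"
    by (subst sum_Times_self_eq_diagonal_plus_pairs[OF fin])
       (auto simp: same_cluster_commute mult.commute power2_eq_square refl intro!: sum.cong)
  finally show ?thesis by simp
qed

lemma cc_opt_greatest:
  assumes "\<And>P. partition_on V P \<Longrightarrow> c \<le> cc_cost V lp P"
  shows "c \<le> cc_opt V lp"
proof -
  have "\<exists>P. partition_on V P"
    using partition_on_singletons by blast
  then show ?thesis
    unfolding cc_opt_def using assms by (intro cInf_greatest) auto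
qed

lemma lp_feasible_zero: "lp_feasible V (\<lambda>_ _. 0)"
  by (simp add: lp_feasible_def)

lemma lp_opt_greatest:
  assumes "\<And>x. lp_feasible V x \<Longrightarrow> c \<le> lp_obj V lp x"
  shows "c \<le> lp_opt V lp"
  unfolding lp_opt_def using assms lp_feasible_zero by (intro cInf_greatest) auto

lemma lp_obj_nonneg:
  assumes "valid_weights V lp" and "lp_feasible V x"
  shows "0 \<le> lp_obj V lp x"
  unfolding lp_obj_def
proof (rule sum_nonneg, clarify)
  fix u v assume "(u, v) \<in> pairs V"
  then have "0 \<le> lp u v" "lp u v \<le> 1" "0 \<le> x u v" "x u v \<le> 1"
    using assms by (auto simp: pairs_def valid_weights_def lp_feasible_def)
  then show "0 \<le> lp u v * x u v + (1 - lp u v) * (1 - x u v)" by simp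
qed

lemma lp_opt_le_obj:
  assumes "valid_weights V lp" and "lp_feasible V x"
  shows "lp_opt V lp \<le> lp_obj V lp x"
  unfolding lp_opt_def
  using assms lp_obj_nonneg[OF assms(1)] by (intro cInf_lower bdd_belowI[of _ 0]) auto

definition half_sign :: "nat \<Rightarrow> nat \<Rightarrow> real" where
  "half_sign k u = (if u < k then 1 else -1)"

definition two_halves_weights :: "nat \<Rightarrow> nat \<Rightarrow> nat \<Rightarrow> real" where
  "two_halves_weights k u v = 1/2 - half_sign k u * half_sign k v / 6"

definition two_halves_lp_point :: "nat \<Rightarrow> nat \<Rightarrow> nat \<Rightarrow> real" where
  "two_halves_lp_point k u v = (if u = v then 0 else 3/4 + half_sign k u * half_sign k v / 4)"

lemma half_sign_square [simp]: "(half_sign k u)\<^sup>2 = 1"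
  by (simp add: half_sign_def)

lemma sum_half_sign: "(\<Sum>u\<in>{0..<2*k}. half_sign k u) = 0"
proof -
  have "(\<Sum>u\<in>{0..<2*k}. half_sign k u) = (\<Sum>u\<in>{0..<k}. half_sign k u) + (\<Sum>u\<in>{k..<2*k}. half_sign k u)"
    by (rule sum.atLeastLessThan_concat[symmetric]) auto
  also have "\<dots> = (\<Sum>u\<in>{0..<k}. 1) + (\<Sum>u\<in>{k..<2*k}. -1)"
    by (intro arg_cong2[where f = "(+)"] sum.cong) (auto simp: half_sign_def)
  finally show ?thesis by simp
qed

lemma two_halves_pair_count: "real (card (pairs {0..<2*k})) = 2 * (real k)\<^sup>2 - real k"
  using card_pairs[of "{0..<2*k}"] by (simp add: power2_eq_square)

lemma two_halves_sign_products: "(\<Sum>(u,v)\<in>pairs {0..<2*k}. half_sign k u * half_sign k v) = - real k"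
  using sum_pairs_product[of "{0..<2*k}" "half_sign k"] by (simp add: sum_half_sign)

lemma valid_weights_two_halves: "valid_weights V (two_halves_weights k)"
  unfolding valid_weights_def two_halves_weights_def half_sign_def by auto

lemma triangle_ineq_two_halves: "triangle_ineq V (two_halves_weights k)"
  unfolding triangle_ineq_def two_halves_weights_def half_sign_def by auto

lemma cc_cost_two_halves:
  "cc_cost {0..<2*k} (two_halves_weights k) P =
     real (card (pairs {0..<2*k})) / 2 - (\<Sum>(u,v)\<in>pairs {0..<2*k}. half_sign k u * half_sign k v) / 6
     + (\<Sum>(u,v)\<in>pairs {0..<2*k}. if same_cluster P u v then half_sign k u * half_sign k v else 0) / 3"
proof -
  have "cc_cost {0..<2*k} (two_halves_weights k) P = (\<Sum>(u,v)\<in>pairs {0..<2*k}.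
      1/2 - half_sign k u * half_sign k v / 6 + (if same_cluster P u v then half_sign k u * half_sign k v else 0) / 3)"
    unfolding cc_cost_def by (rule sum.cong) (auto simp: two_halves_weights_def)
  then show ?thesis
    by (simp add: sum.distrib sum_subtractf sum_divide_distrib case_prod_unfold)
qed

lemma cc_opt_two_halves_ge: "cc_opt {0..<2*k} (two_halves_weights k) \<ge> (real k)\<^sup>2 - 2 * real k / 3"
proof (rule cc_opt_greatest)
  fix P assume "partition_on {0..<2*k} P"
  from sum_pairs_same_cluster_product_ge[OF _ this, of "half_sign k"]
  have "2 * (\<Sum>(u,v)\<in>pairs {0..<2*k}. if same_cluster P u v then half_sign k u * half_sign k v else 0)
          \<ge> - 2 * real k"
    by simp
  then show "(real k)\<^sup>2 - 2 * real k / 3 \<le> cc_cost {0..<2*k} (two_halves_weights k) P"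
    unfolding cc_cost_two_halves two_halves_pair_count two_halves_sign_products
    by (simp add: field_simps)
qed

lemma lp_feasible_two_halves: "lp_feasible V (two_halves_lp_point k)"
proof -
  let ?x = "two_halves_lp_point k"
  have nonneg: "0 \<le> ?x u v" and le_1: "?x u v \<le> 1" for u v
    by (auto simp: two_halves_lp_point_def half_sign_def)
  have ge_half: "1/2 \<le> ?x u v" if "u \<noteq> v" for u v
    using that by (auto simp: two_halves_lp_point_def half_sign_def)
  have diag: "?x u u = 0" for u
    by (simp add: two_halves_lp_point_def)
  have sym: "?x u v = ?x v u" for u v
    by (simp add: two_halves_lp_point_def mult.commute)
  have triangle: "?x u w \<le> ?x u v + ?x v w" for u v w
  proof (cases "u = v \<or> v = w")
    case True
    then show ?thesis using diag nonneg by auto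
  next
    case False
    then show ?thesis using ge_half[of u v] ge_half[of v w] le_1[of u w] by auto
  qed
  show ?thesis
    unfolding lp_feasible_def using nonneg le_1 diag sym triangle by blast
qed

lemma lp_obj_two_halves_point:
  "lp_obj {0..<2*k} (two_halves_weights k) (two_halves_lp_point k) = (5 * (real k)\<^sup>2 - 2 * real k) / 6"
proof -
  have "lp_obj {0..<2*k} (two_halves_weights k) (two_halves_lp_point k)
      = (\<Sum>(u,v)\<in>pairs {0..<2*k}. 5/12 - half_sign k u * half_sign k v / 12)"
    unfolding lp_obj_def
    by (rule sum.cong) (auto simp: pairs_def two_halves_weights_def two_halves_lp_point_def half_sign_def)
  also have "\<dots> = 5/12 * real (card (pairs {0..<2*k}))
      - (\<Sum>(u,v)\<in>pairs {0..<2*k}. half_sign k u * half_sign k v) / 12"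
    by (simp add: sum_subtractf sum_divide_distrib case_prod_unfold)
  finally show ?thesis
    unfolding two_halves_pair_count two_halves_sign_products by (simp add: field_simps)
qed

text \<open>Every term of the LP objective is at least \<open>min \<lambda>\<^sup>+ \<lambda>\<^sup>- = 1/3\<close>.\<close>

lemma lp_opt_two_halves_ge: "lp_opt {0..<2*k} (two_halves_weights k) \<ge> (2 * (real k)\<^sup>2 - real k) / 3"
proof (rule lp_opt_greatest)
  fix x assume x: "lp_feasible {0..<2*k} x"
  have "(2 * (real k)\<^sup>2 - real k) / 3 = (\<Sum>(u,v)\<in>pairs {0..<2*k}. 1/3)"
    by (simp add: two_halves_pair_count)
  also have "\<dots> \<le> lp_obj {0..<2*k} (two_halves_weights k) x"
    unfolding lp_obj_def
  proof (rule sum_mono, clarify)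
    fix u v assume "(u, v) \<in> pairs {0..<2*k}"
    then have "0 \<le> x u v" "x u v \<le> 1" using x by (auto simp: pairs_def lp_feasible_def)
    then show "1/3 \<le> two_halves_weights k u v * x u v + (1 - two_halves_weights k u v) * (1 - x u v)"
      by (auto simp: two_halves_weights_def half_sign_def field_simps)
  qed
  finally show "(2 * (real k)\<^sup>2 - real k) / 3 \<le> lp_obj {0..<2*k} (two_halves_weights k) x" .
qed

lemma two_halves_ratio_ge:
  assumes "k \<ge> 1"
  shows "lp_opt {0..<2*k} (two_halves_weights k) > 0"
    and "cc_opt {0..<2*k} (two_halves_weights k) / lp_opt {0..<2*k} (two_halves_weights k) \<ge> 6/5 - 1 / real k"
proof -
  define K where "K = real k"
  let ?C = "cc_opt {0..<2*k} (two_halves_weights k)"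
  let ?L = "lp_opt {0..<2*k} (two_halves_weights k)"
  have K: "K \<ge> 1" using assms by (simp add: K_def)
  have "K \<le> K\<^sup>2" using K by (simp add: power2_eq_square)
  then have lower_pos: "0 < (2 * K\<^sup>2 - K) / 3" and cost_pos: "0 \<le> K\<^sup>2 - 2 * K / 3"
    using K by simp_all
  show L_pos: "?L > 0"
    using lp_opt_two_halves_ge[of k] lower_pos by (simp add: K_def)
  have L_le: "?L \<le> (5 * K\<^sup>2 - 2 * K) / 6"
    using lp_opt_le_obj[OF valid_weights_two_halves[of _ k] lp_feasible_two_halves[of "{0..<2*k}" k]]
    by (simp add: lp_obj_two_halves_point K_def)
  have "6/5 - 1/K \<le> (K\<^sup>2 - 2 * K / 3) / ((5 * K\<^sup>2 - 2 * K) / 6)"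
    using K by (simp add: power2_eq_square field_simps)
  also have "\<dots> \<le> ?C / ?L"
    using cc_opt_two_halves_ge[of k] cost_pos L_pos L_le by (intro frac_le) (simp_all add: K_def)
  finally show "?C / ?L \<ge> 6/5 - 1 / real k" by (simp add: K_def)
qed

theorem theorem6:
  fixes \<delta> :: real
  assumes "\<delta> > 0"
  shows "\<exists>V lp. finite V \<and> valid_weights V lp \<and> triangle_ineq V lp \<and>
           lp_opt V lp > 0 \<and> cc_opt V lp / lp_opt V lp \<ge> 6/5 - \<delta>"
proof -
  define k where "k = nat \<lceil>1 / \<delta>\<rceil> + 1"
  have k: "k \<ge> 1" by (simp add: k_def)
  have "1 / \<delta> \<le> real k" unfolding k_def by linarith
  then have "1 / real k \<le> \<delta>"
    using assms k by (simp add: field_simps)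
  then show ?thesis
    using two_halves_ratio_ge[OF k] valid_weights_two_halves triangle_ineq_two_halves
    by (intro exI[of _ "{0..<2*k}"] exI[of _ "two_halves_weights k"]) auto
qed

end
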